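(* Let $k,n$ be integers with $k\geq 5$ and $n\geq 4$, and let $c$ be an exact $k$-coloring of $\mathcal{B}_n$ with $c(\emptyset)\neq c([n])$. Then $\mathcal{B}_n$ contains no rainbow induced copy of $\mathcal{B}_2$ if and only if $k=5$ and $c$ is of Type 1.
   Context: $\mathcal{B}_n$ is the Boolean lattice of subsets of $[n]$ under inclusion. For $X\subseteq Y$: $\mathcal{B}_{[X,Y]}=\{Z:X\subseteq Z\subseteq Y\}$, and $\mathcal{B}_{(X,Y)}$, $\mathcal{B}_{(X,Y]}$, $\mathcal{B}_{[X,Y)}$ are defined analogously with strict inclusions at the open ends. An exact $k$-coloring is a surjective map $c:\mathcal{B}_n\to[k]$. A rainbow induced copy of $\mathcal{B}_2$ is four sets $W_1,W_2,W_3,W_4$ with $W_1\subsetneq W_2\subsetneq W_4$, $W_1\subsetneq W_3\subsetneq W_4$, $W_2,W_3$ incomparable, and $c(W_1),\dots,c(W_4)$ pairwise distinct. "Families $\mathcal{F}_1,\dots,\mathcal{F}_r$ are monochromatically colored with distinct colors" means each $\mathcal{F}_i$ is monochromatic and no two sets from different families share a color. The coloring $c$ is of Type 1 if there exist $X_0,Y_0$ with $\emptyset\subsetneq X_0\subsetneq Y_0\subsetneq[n]$ and $|Y_0|\geq|X_0|+2$ such that the families $\mathcal{B}_{[\emptyset,Y_0]}\setminus\mathcal{B}_{[X_0,Y_0]}$, $\{X_0\}$, $\mathcal{B}_{(X_0,Y_0)}$, $\{Y_0\}$, $\mathcal{B}_{[X_0,[n]]}\setminus\mathcal{B}_{[X_0,Y_0]}$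 are monochromatically colored with distinct colors, and each set in $\mathcal{B}_n\setminus(\mathcal{B}_{[\emptyset,Y_0]}\cup\mathcal{B}_{[X_0,[n]]})$ has the same color as the sets of the first or of the last of these families. *)

theory Defs
  imports Main
begin

definition Bn :: "nat \<Rightarrow> nat set set" where
  "Bn n = Pow {1..n}"

definition intv_cc :: "nat set \<Rightarrow> nat set \<Rightarrow> nat set set" where
  "intv_cc X Y = {Z. X \<subseteq> Z \<and> Z \<subseteq> Y}"

definition intv_oo :: "nat set \<Rightarrow> nat set \<Rightarrow> nat set set" where
  "intv_oo X Y = {Z. X \<subset> Z \<and> Z \<subset> Y}"

definition exact_coloring :: "nat \<Rightarrow> nat \<Rightarrow> (nat set \<Rightarrow> nat) \<Rightarrow> bool" where
  "exact_coloring n k c \<longleftrightarrow> c ` Bn n = {1..k}"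

definition rainbow_B2 :: "nat \<Rightarrow> (nat set \<Rightarrow> nat) \<Rightarrow> nat set \<Rightarrow> nat set \<Rightarrow> nat set \<Rightarrow> nat set \<Rightarrow> bool" where
  "rainbow_B2 n c W1 W2 W3 W4 \<longleftrightarrow>
     W1 \<in> Bn n \<and> W2 \<in> Bn n \<and> W3 \<in> Bn n \<and> W4 \<in> Bn n \<and>
     W1 \<subset> W2 \<and> W2 \<subset> W4 \<and> W1 \<subset> W3 \<and> W3 \<subset> W4 \<and>
     \<not> W2 \<subseteq> W3 \<and> \<not> W3 \<subseteq> W2 \<and>
     distinct [c W1, c W2, c W3, c W4]"

definition has_rainbow_B2 :: "nat \<Rightarrow> (nat set \<Rightarrow> nat) \<Rightarrow> bool" where
  "has_rainbow_B2 n c \<longleftrightarrow> (\<exists>W1 W2 W3 W4. rainbow_B2 n c W1 W2 W3 W4)"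

definition mono_distinct :: "(nat set \<Rightarrow> nat) \<Rightarrow> nat set set list \<Rightarrow> bool" where
  "mono_distinct c Fs \<longleftrightarrow>
     (\<forall>i < length Fs. \<forall>A \<in> Fs ! i. \<forall>B \<in> Fs ! i. c A = c B) \<and>
     (\<forall>i < length Fs. \<forall>j < length Fs. i \<noteq> j \<longrightarrow>
        (\<forall>A \<in> Fs ! i. \<forall>B \<in> Fs ! j. c A \<noteq> c B))"

definition type1 :: "nat \<Rightarrow> (nat set \<Rightarrow> nat) \<Rightarrow> bool" where
  "type1 n c \<longleftrightarrow> (\<exists>X0 Y0.
     {} \<subset> X0 \<and> X0 \<subset> Y0 \<and> Y0 \<subset> {1..n} \<and> card Y0 \<ge> card X0 + 2 \<and>
     (let F1 = intv_cc {} Y0 - intv_cc X0 Y0;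
          F5 = intv_cc X0 {1..n} - intv_cc X0 Y0
      in mono_distinct c [F1, {X0}, intv_oo X0 Y0, {Y0}, F5] \<and>
         (\<forall>Z \<in> Bn n - (intv_cc {} Y0 \<union> intv_cc X0 {1..n}).
            (\<exists>A \<in> F1. c Z = c A) \<or> (\<exists>A \<in> F5. c Z = c A))))"

end

theory Submission
  imports Defs
begin

text \<open>
  Write a = c {} and b = c [n]. Without a rainbow B_2, two sets whose colors are distinct and
  different from a and b are comparable, for otherwise they would form a rainbow B_2 together
  with {} and [n]. With at least five colors this gives a chain P < Q < R colored with three
  further colors. Forbidding rainbow copies of B_2 around this chain forces every set strictly
  between P and R to have the color of Q, the sets below R but not above P to have color a, the
  sets above P but not below R to have color b, and all other sets to have color a or b; so
  k = 5 and c is of Type 1 with X_0 = P and Y_0 = R. The statements about the upper part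
  follow from those about the lower part by complementation in [n].
  Conversely, in a Type 1 coloring the two middle sets of a rainbow B_2 both lie in the open
  interval (X_0, Y_0), which is monochromatic.
\<close>

lemma rainbow_B2_iff:
  "rainbow_B2 n c W1 W2 W3 W4 \<longleftrightarrow>
     W4 \<subseteq> {1..n} \<and> W1 \<subset> W2 \<and> W2 \<subset> W4 \<and> W1 \<subset> W3 \<and> W3 \<subset> W4 \<and>
     \<not> W2 \<subseteq> W3 \<and> \<not> W3 \<subseteq> W2 \<and> distinct [c W1, c W2, c W3, c W4]"
proof -
  have "W1 \<subseteq> {1..n} \<and> W2 \<subseteq> {1..n} \<and> W3 \<subseteq> {1..n}"
    if "W4 \<subseteq> {1..n}" "W1 \<subset> W2" "W2 \<subset> W4" "W3 \<subset> W4"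
    using that by blast
  then show ?thesis
    unfolding rainbow_B2_def Bn_def Pow_iff by blast
qed

definition rainbow_chain :: "nat \<Rightarrow> (nat set \<Rightarrow> 'c) \<Rightarrow> nat set \<Rightarrow> nat set \<Rightarrow> nat set \<Rightarrow> bool" where
  "rainbow_chain n c P Q R \<longleftrightarrow>
     P \<subset> Q \<and> Q \<subset> R \<and> R \<subseteq> {1..n} \<and> distinct [c {}, c P, c Q, c R, c {1..n}]"

lemma rainbow_chain_complement:
  assumes "rainbow_chain n c P Q R"
  shows "rainbow_chain n (\<lambda>Z. c ({1..n} - Z)) ({1..n} - R) ({1..n} - Q) ({1..n} - P)"
  using assms unfolding rainbow_chain_def by (auto simp: Diff_Diff_Int Int_absorb1)

locale rainbow_B2_free =
  fixes n :: nat and c :: "nat set \<Rightarrow> 'c"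
  assumes B2_not_rainbow: "\<And>W1 W2 W3 W4. \<lbrakk>W4 \<subseteq> {1..n}; W1 \<subset> W2; W2 \<subset> W4; W1 \<subset> W3; W3 \<subset> W4;
      \<not> W2 \<subseteq> W3; \<not> W3 \<subseteq> W2\<rbrakk> \<Longrightarrow> \<not> distinct [c W1, c W2, c W3, c W4]"
    and color_empty_neq_full: "c {} \<noteq> c {1..n}"
begin

lemma rainbow_B2_free_complement: "rainbow_B2_free n (\<lambda>Z. c ({1..n} - Z))"
proof
  let ?N = "{1..n}"
  fix W1 W2 W3 W4
  assume "W4 \<subseteq> ?N" "W1 \<subset> W2" "W2 \<subset> W4" "W1 \<subset> W3" "W3 \<subset> W4" "\<not> W2 \<subseteq> W3" "\<not> W3 \<subseteq> W2"
  then have "\<not> distinct [c (?N - W4), c (?N - W2), c (?N - W3), c (?N - W1)]"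
    by (intro B2_not_rainbow) auto
  then show "\<not> distinct [c (?N - W1), c (?N - W2), c (?N - W3), c (?N - W4)]"
    by auto
next
  show "c ({1..n} - {}) \<noteq> c ({1..n} - {1..n})"
    using color_empty_neq_full by simp
qed

lemma inner_colors_comparable:
  assumes "S \<subseteq> {1..n}" "T \<subseteq> {1..n}" "c S \<notin> {c {}, c {1..n}}" "c T \<notin> {c {}, c {1..n}}"
    and "c S \<noteq> c T"
  shows "S \<subseteq> T \<or> T \<subseteq> S"
proof (rule ccontr)
  assume incomparable: "\<not> (S \<subseteq> T \<or> T \<subseteq> S)"
  with assms have "{} \<subset> S" "S \<subset> {1..n}" "{} \<subset> T" "T \<subset> {1..n}"
    by auto
  with incomparable have "\<not> distinct [c {}, c S, c T, c {1..n}]"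
    using B2_not_rainbow by blast
  with assms color_empty_neq_full show False
    by auto
qed

lemma color_inside_interval_incomparable:
  assumes chain: "rainbow_chain n c P Q R"
    and Z: "P \<subset> Z" "Z \<subset> R" "\<not> Z \<subseteq> Q" "\<not> Q \<subseteq> Z"
  shows "c Z = c Q"
proof (rule ccontr)
  assume ZQ: "c Z \<noteq> c Q"
  from chain have PQR: "P \<subset> Q" "Q \<subset> R" "R \<subseteq> {1..n}"
    and colors: "distinct [c {}, c P, c Q, c R, c {1..n}]"
    unfolding rainbow_chain_def by auto
  have "c Z \<notin> {c P, c R}"
  proof
    assume "c Z \<in> {c P, c R}"
    with PQR Z colors ZQ have "Z \<subseteq> Q \<or> Q \<subseteq> Z"
      by (intro inner_colors_comparable) auto
    with Z show False
      by blast
  qed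
  with colors ZQ have "distinct [c P, c Z, c Q, c R]"
    by auto
  with PQR Z show False
    using B2_not_rainbow[of R P Z Q] by blast
qed

lemma color_inside_interval:
  assumes chain: "rainbow_chain n c P Q R" and Z: "P \<subset> Z" "Z \<subset> R"
  shows "c Z = c Q"
proof -
  from chain have PQR: "P \<subset> Q" "Q \<subset> R" "R \<subseteq> {1..n}"
    unfolding rainbow_chain_def by auto
  have color_atom_outside_Q: "c (insert i P) = c Q" if "i \<in> R - Q" for i
    using PQR that by (intro color_inside_interval_incomparable[OF chain]) auto
  obtain j where j: "j \<in> R - Q"
    using PQR by blast
  have chain_j: "rainbow_chain n c P (insert j P) R"
    using chain j PQR color_atom_outside_Q[OF j] unfolding rainbow_chain_def by auto
  have color_atom: "c (insert i P) = c Q" if "i \<in> R - P" for i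
  proof (cases "i \<in> Q")
    case True
    with that j PQR have "c (insert i P) = c (insert j P)"
      by (intro color_inside_interval_incomparable[OF chain_j]) auto
    with color_atom_outside_Q[OF j] show ?thesis
      by simp
  qed (use that color_atom_outside_Q in blast)
  obtain i where i: "i \<in> R - Z"
    using Z by blast
  have color_i: "c (insert i P) = c Q"
    using color_atom i Z by blast
  then have chain_i: "rainbow_chain n c P (insert i P) R"
    using chain i Z PQR unfolding rainbow_chain_def by auto
  have "c Z = c (insert i P)"
    using Z i by (intro color_inside_interval_incomparable[OF chain_i]) auto
  with color_i show ?thesis
    by simp
qed

lemma color_insert_bottom:
  assumes chain: "rainbow_chain n c P Q R" and i: "i \<in> R - P"
  shows "c (insert i P) = c Q"
proof -
  from chain have "P \<subset> Q" "Q \<subset> R"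
    unfolding rainbow_chain_def by auto
  then obtain e j where "e \<in> Q - P" "j \<in> R - Q"
    by blast
  with \<open>P \<subset> Q\<close> \<open>Q \<subset> R\<close> i show ?thesis
    by (intro color_inside_interval[OF chain]) auto
qed

lemma color_outside_interval_neq_bottom:
  assumes chain: "rainbow_chain n c P Q R"
    and Z: "Z \<subseteq> {1..n}" "\<not> (P \<subseteq> Z \<and> Z \<subseteq> R)"
  shows "c Z \<noteq> c P"
proof
  assume ZP: "c Z = c P"
  from chain have PQR: "P \<subset> Q" "Q \<subset> R" "R \<subseteq> {1..n}"
    and colors: "distinct [c {}, c P, c Q, c R, c {1..n}]"
    unfolding rainbow_chain_def by auto
  obtain e j where e: "e \<in> Q - P" and j: "j \<in> R - Q"
    using PQR by blast
  have "Z \<subseteq> R \<or> R \<subseteq> Z"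
    using Z PQR colors ZP by (intro inner_colors_comparable) auto
  then consider "Z \<subseteq> R" | "R \<subset> Z"
    using colors ZP by auto
  then show False
  proof cases
    case 1
    with Z have "\<not> P \<subseteq> Z"
      by blast
    have "Z \<subseteq> insert i P" if i: "i \<in> R - P" for i
    proof -
      have "Z \<subseteq> insert i P \<or> insert i P \<subseteq> Z"
        using i Z PQR colors ZP color_insert_bottom[OF chain i]
        by (intro inner_colors_comparable) auto
      with \<open>\<not> P \<subseteq> Z\<close> show ?thesis
        by blast
    qed
    from this[of e] this[of j] have "Z \<subset> P"
      using e j PQR \<open>\<not> P \<subseteq> Z\<close> by blast
    with PQR colors ZP have "rainbow_chain n c Z Q R"
      unfolding rainbow_chain_def by auto
    then have "c P = c Q"
      by (rule color_inside_interval) (use \<open>Z \<subset> P\<close> PQR in auto)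
    with colors show False
      by simp
  next
    case 2
    with Z PQR colors ZP have chain_QRZ: "rainbow_chain n c Q R Z"
      unfolding rainbow_chain_def by auto
    obtain i where i: "i \<in> Z - R"
      using 2 by blast
    with PQR have "c (insert i Q) = c R"
      by (intro color_insert_bottom[OF chain_QRZ]) auto
    moreover have "\<not> distinct [c {}, c (insert j P), c (insert i Q), c Z]"
      using e i j PQR 2 Z by (intro B2_not_rainbow) auto
    moreover have "c (insert j P) = c Q"
      using color_insert_bottom[OF chain] j PQR by blast
    ultimately show False
      using colors ZP by auto
  qed
qed

lemma color_outside_interval_neq_top:
  assumes chain: "rainbow_chain n c P Q R"
    and Z: "Z \<subseteq> {1..n}" "\<not> (P \<subseteq> Z \<and> Z \<subseteq> R)"
  shows "c Z \<noteq> c R"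
proof -
  let ?N = "{1..n}"
  have N: "P \<subseteq> ?N" "R \<subseteq> ?N"
    using chain unfolding rainbow_chain_def by auto
  have "c (?N - (?N - Z)) \<noteq> c (?N - (?N - R))"
    using Z N by (intro rainbow_B2_free.color_outside_interval_neq_bottom[OF
        rainbow_B2_free_complement rainbow_chain_complement[OF chain]]) auto
  with Z N show ?thesis
    by (simp add: Diff_Diff_Int Int_absorb1)
qed

lemma color_outside_interval:
  assumes chain: "rainbow_chain n c P Q R"
    and Z: "Z \<subseteq> {1..n}" "\<not> (P \<subseteq> Z \<and> Z \<subseteq> R)"
  shows "c Z \<in> {c {}, c {1..n}}"
proof (rule ccontr)
  assume inner: "c Z \<notin> {c {}, c {1..n}}"
  from chain have PQR: "P \<subset> Q" "Q \<subset> R" "R \<subseteq> {1..n}"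
    and colors: "distinct [c {}, c P, c Q, c R, c {1..n}]"
    unfolding rainbow_chain_def by auto
  have ZPR: "c Z \<noteq> c P" "c Z \<noteq> c R"
    using color_outside_interval_neq_bottom[OF chain Z] color_outside_interval_neq_top[OF chain Z] .
  have "Z \<subseteq> P \<or> P \<subseteq> Z" "Z \<subseteq> R \<or> R \<subseteq> Z"
    using Z PQR inner colors ZPR by (intro inner_colors_comparable; auto)+
  with Z consider "Z \<subset> P" | "R \<subset> Z"
    by blast
  then show False
  proof cases
    case 1
    with PQR inner colors ZPR have "rainbow_chain n c Z P R"
      unfolding rainbow_chain_def by auto
    then have "c Q = c P"
      by (rule color_inside_interval) (use 1 PQR in auto)
    with colors show False
      by simp
  next
    case 2
    with Z PQR inner colors ZPR have "rainbow_chain n c P R Z"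
      unfolding rainbow_chain_def by auto
    then have "c Q = c R"
      by (rule color_inside_interval) (use 2 PQR in auto)
    with colors show False
      by simp
  qed
qed

lemma color_below_interval:
  assumes chain: "rainbow_chain n c P Q R"
    and Z: "Z \<subseteq> R" "\<not> P \<subseteq> Z"
  shows "c Z = c {}"
proof (rule ccontr)
  assume "c Z \<noteq> c {}"
  from chain have PQR: "P \<subset> Q" "Q \<subset> R" "R \<subseteq> {1..n}"
    and colors: "distinct [c {}, c P, c Q, c R, c {1..n}]"
    unfolding rainbow_chain_def by auto
  obtain e j where e: "e \<in> Q - P" and j: "j \<in> R - Q"
    using PQR by blast
  have full_inside_P: "W \<subset> P" if W: "W \<subseteq> R" "\<not> P \<subseteq> W" "c W = c {1..n}" for W
  proof -
    have "W \<subseteq> insert i P" if i: "i \<in> R - P" for i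
    proof (rule ccontr)
      assume "\<not> W \<subseteq> insert i P"
      moreover have "W \<noteq> {}" "W \<noteq> R"
        using W colors color_empty_neq_full by auto
      ultimately have "\<not> distinct [c {}, c W, c (insert i P), c R]"
        using W i e j PQR by (intro B2_not_rainbow) auto
      with W colors color_insert_bottom[OF chain i] show False
        by auto
    qed
    from this[of e] this[of j] show "W \<subset> P"
      using e j W PQR by blast
  qed
  have "c Z = c {1..n}"
    using color_outside_interval[OF chain] Z PQR \<open>c Z \<noteq> c {}\<close> by blast
  with Z have "Z \<subset> P"
    by (rule full_inside_P)
  have "c (insert j Z) \<in> {c {}, c {1..n}}"
    using Z j PQR by (intro color_outside_interval[OF chain]) auto
  moreover have "c (insert j Z) \<noteq> c {1..n}"
    using full_inside_P[of "insert j Z"] Z j PQR by blast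
  moreover have "\<not> distinct [c Z, c P, c (insert j Z), c (insert j P)]"
    using \<open>Z \<subset> P\<close> Z j PQR by (intro B2_not_rainbow) auto
  moreover have "c (insert j P) = c Q"
    using color_insert_bottom[OF chain] j PQR by blast
  ultimately show False
    using \<open>c Z = c {1..n}\<close> colors by auto
qed

lemma color_above_interval:
  assumes chain: "rainbow_chain n c P Q R"
    and Z: "P \<subseteq> Z" "Z \<subseteq> {1..n}" "\<not> Z \<subseteq> R"
  shows "c Z = c {1..n}"
proof -
  let ?N = "{1..n}"
  have N: "P \<subseteq> ?N" "R \<subseteq> ?N"
    using chain unfolding rainbow_chain_def by auto
  have "c (?N - (?N - Z)) = c (?N - {})"
    using Z N by (intro rainbow_B2_free.color_below_interval[OF
        rainbow_B2_free_complement rainbow_chain_complement[OF chain]]) auto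
  with Z show ?thesis
    by (simp add: Diff_Diff_Int Int_absorb1)
qed

lemma colors_of_rainbow_chain:
  assumes chain: "rainbow_chain n c P Q R"
  shows "c ` Pow {1..n} \<subseteq> {c {}, c P, c Q, c R, c {1..n}}"
proof
  fix x
  assume "x \<in> c ` Pow {1..n}"
  then obtain Z where Z: "Z \<subseteq> {1..n}" and x: "x = c Z"
    by blast
  show "x \<in> {c {}, c P, c Q, c R, c {1..n}}"
  proof (cases "P \<subseteq> Z \<and> Z \<subseteq> R")
    case True
    then have "Z = P \<or> Z = R \<or> (P \<subset> Z \<and> Z \<subset> R)"
      by blast
    then show ?thesis
      using color_inside_interval[OF chain] x by blast
  next
    case False
    then show ?thesis
      using color_outside_interval[OF chain Z] x by blast
  qed
qed

lemma card_colors_le_5: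
  assumes "rainbow_chain n c P Q R"
  shows "card (c ` Pow {1..n}) \<le> 5"
proof -
  have "card (c ` Pow {1..n}) \<le> card (set [c {}, c P, c Q, c R, c {1..n}])"
    using colors_of_rainbow_chain[OF assms] by (intro card_mono) simp_all
  also have "\<dots> \<le> 5"
    using card_length[of "[c {}, c P, c Q, c R, c {1..n}]"] by simp
  finally show ?thesis .
qed

lemma rainbow_chain_if_three_inner_colors:
  assumes UVW: "U \<subseteq> {1..n}" "V \<subseteq> {1..n}" "W \<subseteq> {1..n}"
    and colors: "distinct [c {}, c U, c V, c W, c {1..n}]"
  shows "\<exists>P Q R. rainbow_chain n c P Q R"
proof -
  have comparable: "S \<subset> T \<or> T \<subset> S" if "S \<in> {U, V, W}" "T \<in> {U, V, W}" "c S \<noteq> c T" for S T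
  proof -
    have "S \<subseteq> T \<or> T \<subseteq> S"
      using that UVW colors by (intro inner_colors_comparable) auto
    with that show ?thesis
      by auto
  qed
  have "U \<subset> V \<or> V \<subset> U" "U \<subset> W \<or> W \<subset> U" "V \<subset> W \<or> W \<subset> V"
    using comparable colors by simp_all
  then consider "U \<subset> V" "V \<subset> W" | "U \<subset> W" "W \<subset> V" | "V \<subset> U" "U \<subset> W"
    | "V \<subset> W" "W \<subset> U" | "W \<subset> U" "U \<subset> V" | "W \<subset> V" "V \<subset> U"
    by blast
  moreover have chain: "\<exists>P Q R. rainbow_chain n c P Q R"
    if "X \<subset> Y" "Y \<subset> Z" "Z \<subseteq> {1..n}" "distinct [c {}, c X, c Y, c Z, c {1..n}]" for X Y Z
    using that unfolding rainbow_chain_def by blast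
  ultimately show ?thesis
  proof cases
    case 1
    with UVW colors show ?thesis by (intro chain[of U V W]) auto
  next
    case 2
    with UVW colors show ?thesis by (intro chain[of U W V]) auto
  next
    case 3
    with UVW colors show ?thesis by (intro chain[of V U W]) auto
  next
    case 4
    with UVW colors show ?thesis by (intro chain[of V W U]) auto
  next
    case 5
    with UVW colors show ?thesis by (intro chain[of W U V]) auto
  next
    case 6
    with UVW colors show ?thesis by (intro chain[of W V U]) auto
  qed
qed

lemma rainbow_chain_exists:
  assumes "5 \<le> card (c ` Pow {1..n})"
  shows "\<exists>P Q R. rainbow_chain n c P Q R"
proof -
  let ?inner = "c ` Pow {1..n} - {c {}, c {1..n}}"
  have "card {c {}, c {1..n}} = 2"
    using color_empty_neq_full by simp
  then have "3 \<le> card ?inner"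
    using assms by (subst card_Diff_subset) auto
  then obtain T where "T \<subseteq> ?inner" "card T = 3"
    by (meson obtain_subset_with_card_n)
  then obtain U V W where "U \<subseteq> {1..n}" "V \<subseteq> {1..n}" "W \<subseteq> {1..n}"
    and "distinct [c {}, c U, c V, c W, c {1..n}]"
    unfolding card_3_iff using color_empty_neq_full by auto
  then show ?thesis
    by (rule rainbow_chain_if_three_inner_colors)
qed

end

lemma rainbow_B2_free_if_not_has_rainbow_B2:
  assumes "\<not> has_rainbow_B2 n c" and "c {} \<noteq> c {1..n}"
  shows "rainbow_B2_free n c"
proof
  fix W1 W2 W3 W4
  assume "W4 \<subseteq> {1..n}" "W1 \<subset> W2" "W2 \<subset> W4" "W1 \<subset> W3" "W3 \<subset> W4" "\<not> W2 \<subseteq> W3" "\<not> W3 \<subseteq> W2"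
  with assms(1) show "\<not> distinct [c W1, c W2, c W3, c W4]"
    unfolding has_rainbow_B2_def rainbow_B2_iff by blast
qed (fact assms(2))

lemma mono_distinctI:
  assumes "distinct cs" and "list_all2 (\<lambda>F x. \<forall>A\<in>F. c A = x) Fs cs"
  shows "mono_distinct c Fs"
  unfolding mono_distinct_def
proof (intro conjI allI impI ballI)
  have color: "c A = cs ! i" if "i < length Fs" "A \<in> Fs ! i" for i A
    using assms(2) that by (simp add: list_all2_conv_all_nth)
  fix i j A B
  show "c A = c B" if "i < length Fs" "A \<in> Fs ! i" "B \<in> Fs ! i"
    using color that by simp
  show "c A \<noteq> c B" if "i < length Fs" "j < length Fs" "i \<noteq> j" "A \<in> Fs ! i" "B \<in> Fs ! j"
    using color[of i A] color[of j B] that assms list_all2_lengthD[OF assms(2)]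
    by (simp add: nth_eq_iff_index_eq)
qed

lemma mono_distinctD:
  assumes "mono_distinct c Fs" and "i < length Fs" "A \<in> Fs ! i"
  shows "B \<in> Fs ! i \<Longrightarrow> c A = c B"
    and "j < length Fs \<Longrightarrow> i \<noteq> j \<Longrightarrow> B \<in> Fs ! j \<Longrightarrow> c A \<noteq> c B"
  using assms unfolding mono_distinct_def by blast+

lemma type1_if_rainbow_chain:
  fixes c :: "nat set \<Rightarrow> nat"
  assumes "rainbow_B2_free n c" and chain: "rainbow_chain n c P Q R"
  shows "type1 n c"
proof -
  interpret rainbow_B2_free n c
    by fact
  let ?N = "{1..n}"
  let ?F1 = "intv_cc {} R - intv_cc P R" and ?F5 = "intv_cc P ?N - intv_cc P R"
  from chain have PQR: "P \<subset> Q" "Q \<subset> R" "R \<subseteq> ?N"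
    and colors: "distinct [c {}, c P, c Q, c R, c ?N]"
    unfolding rainbow_chain_def by blast+
  have "P \<noteq> {}" "R \<noteq> ?N"
    using colors by (intro notI; clarsimp)+
  have "finite R"
    using PQR finite_subset by blast
  then have "card P < card Q" "card Q < card R"
    using PQR by (meson psubset_card_mono finite_subset psubset_imp_subset)+
  then have card: "card P + 2 \<le> card R"
    by linarith
  have mono: "mono_distinct c [?F1, {P}, intv_oo P R, {R}, ?F5]"
  proof (rule mono_distinctI)
    show "list_all2 (\<lambda>F x. \<forall>A\<in>F. c A = x) [?F1, {P}, intv_oo P R, {R}, ?F5]
        [c {}, c P, c Q, c R, c ?N]"
      using color_below_interval[OF chain] color_inside_interval[OF chain]
        color_above_interval[OF chain]
      by (auto simp: intv_cc_def intv_oo_def)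
  qed (fact colors)
  have outside: "\<forall>Z \<in> Bn n - (intv_cc {} R \<union> intv_cc P ?N).
      (\<exists>A \<in> ?F1. c Z = c A) \<or> (\<exists>A \<in> ?F5. c Z = c A)"
  proof
    fix Z
    assume "Z \<in> Bn n - (intv_cc {} R \<union> intv_cc P ?N)"
    then have "Z \<subseteq> ?N" "\<not> (P \<subseteq> Z \<and> Z \<subseteq> R)"
      unfolding Bn_def intv_cc_def by blast+
    moreover have "{} \<in> ?F1" "?N \<in> ?F5"
      using PQR \<open>P \<noteq> {}\<close> \<open>R \<noteq> ?N\<close> unfolding intv_cc_def by blast+
    ultimately show "(\<exists>A \<in> ?F1. c Z = c A) \<or> (\<exists>A \<in> ?F5. c Z = c A)"
      using color_outside_interval[OF chain] by blast
  qed
  have "{} \<subset> P" "P \<subset> R" "R \<subset> ?N"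
    using PQR \<open>P \<noteq> {}\<close> \<open>R \<noteq> ?N\<close> by blast+
  with card mono outside show ?thesis
    unfolding type1_def Let_def by (intro exI[of _ P] exI[of _ R]) simp
qed

lemma B2_not_rainbow_if_colored_around_interval:
  fixes N X Y :: "'a set" and c :: "'a set \<Rightarrow> 'c"
  assumes "a \<noteq> b"
    and below: "\<And>Z. Z \<subseteq> Y \<Longrightarrow> \<not> X \<subseteq> Z \<Longrightarrow> c Z = a"
    and above: "\<And>Z. X \<subseteq> Z \<Longrightarrow> Z \<subseteq> N \<Longrightarrow> \<not> Z \<subseteq> Y \<Longrightarrow> c Z = b"
    and outside: "\<And>Z. Z \<subseteq> N \<Longrightarrow> \<not> X \<subseteq> Z \<Longrightarrow> \<not> Z \<subseteq> Y \<Longrightarrow> c Z \<in> {a, b}"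
    and inside: "\<And>Z Z'. X \<subset> Z \<Longrightarrow> Z \<subset> Y \<Longrightarrow> X \<subset> Z' \<Longrightarrow> Z' \<subset> Y \<Longrightarrow> c Z = c Z'"
    and W: "W4 \<subseteq> N" "W1 \<subset> W2" "W2 \<subset> W4" "W1 \<subset> W3" "W3 \<subset> W4" "\<not> W2 \<subseteq> W3" "\<not> W3 \<subseteq> W2"
  shows "\<not> distinct [c W1, c W2, c W3, c W4]"
proof
  assume colors: "distinct [c W1, c W2, c W3, c W4]"
  have two_colored: "c Z \<in> {a, b}" if "Z \<subseteq> N" "\<not> (X \<subseteq> Z \<and> Z \<subseteq> Y)" for Z
    using that below[of Z] above[of Z] outside[of Z] by (cases "X \<subseteq> Z"; cases "Z \<subseteq> Y") auto
  have in_interval: "X \<subseteq> V \<and> V \<subseteq> Y" if V: "W1 \<subset> V" "V \<subset> W4" "c V \<noteq> c W1" "c V \<noteq> c W4" for V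
  proof (rule ccontr)
    assume "\<not> (X \<subseteq> V \<and> V \<subseteq> Y)"
    then consider "X \<subseteq> V" "\<not> V \<subseteq> Y" | "\<not> X \<subseteq> V" "V \<subseteq> Y" | "\<not> X \<subseteq> V" "\<not> V \<subseteq> Y"
      by blast
    then show False
    proof cases
      case 1
      then have "c V = b" "c W4 = b"
        using V W by (intro above; auto)+
      with V show False
        by simp
    next
      case 2
      then have "c V = a" "c W1 = a"
        using V W by (intro below; auto)+
      with V show False
        by simp
    next
      case 3
      then have "c V \<in> {a, b}" "c W1 \<in> {a, b}" "c W4 \<in> {a, b}"
        using V W by (intro two_colored; auto)+
      with V colors show False
        by auto
    qed
  qed
  have "X \<subseteq> W2 \<and> W2 \<subseteq> Y" "X \<subseteq> W3 \<and> W3 \<subseteq> Y"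
    using W colors by (intro in_interval; auto)+
  with W have "X \<subset> W2" "W2 \<subset> Y" "X \<subset> W3" "W3 \<subset> Y"
    by blast+
  then have "c W2 = c W3"
    by (rule inside)
  with colors show False
    by simp
qed

lemma type1E:
  assumes "type1 n c"
  obtains X Y where "c {} \<noteq> c {1..n}"
    and "\<And>Z. Z \<subseteq> Y \<Longrightarrow> \<not> X \<subseteq> Z \<Longrightarrow> c Z = c {}"
    and "\<And>Z. X \<subseteq> Z \<Longrightarrow> Z \<subseteq> {1..n} \<Longrightarrow> \<not> Z \<subseteq> Y \<Longrightarrow> c Z = c {1..n}"
    and "\<And>Z. Z \<subseteq> {1..n} \<Longrightarrow> \<not> X \<subseteq> Z \<Longrightarrow> \<not> Z \<subseteq> Y \<Longrightarrow> c Z \<in> {c {}, c {1..n}}"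
    and "\<And>Z Z'. X \<subset> Z \<Longrightarrow> Z \<subset> Y \<Longrightarrow> X \<subset> Z' \<Longrightarrow> Z' \<subset> Y \<Longrightarrow> c Z = c Z'"
proof -
  let ?N = "{1..n}"
  obtain X Y where XY: "{} \<subset> X" "X \<subset> Y" "Y \<subset> ?N"
    and mono: "mono_distinct c [intv_cc {} Y - intv_cc X Y, {X}, intv_oo X Y, {Y},
      intv_cc X ?N - intv_cc X Y]"
    and rest: "\<forall>Z \<in> Bn n - (intv_cc {} Y \<union> intv_cc X ?N).
      (\<exists>A \<in> intv_cc {} Y - intv_cc X Y. c Z = c A) \<or> (\<exists>A \<in> intv_cc X ?N - intv_cc X Y. c Z = c A)"
    using assms unfolding type1_def Let_def by blast
  have "\<not> ?N \<subseteq> Y"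
    using XY by blast
  have below: "c Z = c {}" if "Z \<subseteq> Y" "\<not> X \<subseteq> Z" for Z
    using mono_distinctD(1)[OF mono, of 0 Z "{}"] that XY by (simp add: intv_cc_def)
  have above: "c Z = c ?N" if "X \<subseteq> Z" "Z \<subseteq> ?N" "\<not> Z \<subseteq> Y" for Z
    using mono_distinctD(1)[OF mono, of 4 Z ?N] that XY \<open>\<not> ?N \<subseteq> Y\<close> by (simp add: intv_cc_def)
  have outside: "c Z \<in> {c {}, c ?N}" if "Z \<subseteq> ?N" "\<not> X \<subseteq> Z" "\<not> Z \<subseteq> Y" for Z
  proof -
    have "Z \<in> Bn n - (intv_cc {} Y \<union> intv_cc X ?N)"
      using that unfolding Bn_def intv_cc_def by blast
    with rest have "(\<exists>A \<in> intv_cc {} Y - intv_cc X Y. c Z = c A) \<or>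
        (\<exists>A \<in> intv_cc X ?N - intv_cc X Y. c Z = c A)"
      by (rule bspec)
    then show ?thesis
    proof (elim disjE bexE)
      fix A
      assume "A \<in> intv_cc {} Y - intv_cc X Y" "c Z = c A"
      moreover from this(1) have "c A = c {}"
        by (intro below) (auto simp: intv_cc_def)
      ultimately show ?thesis
        by simp
    next
      fix A
      assume "A \<in> intv_cc X ?N - intv_cc X Y" "c Z = c A"
      moreover from this(1) have "c A = c ?N"
        by (intro above) (auto simp: intv_cc_def)
      ultimately show ?thesis
        by simp
    qed
  qed
  have inside: "c Z = c Z'" if "X \<subset> Z" "Z \<subset> Y" "X \<subset> Z'" "Z' \<subset> Y" for Z Z'
    using mono_distinctD(1)[OF mono, of 2 Z Z'] that by (simp add: intv_oo_def)
  have "c {} \<noteq> c ?N"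
    using mono_distinctD(2)[OF mono, of 0 "{}" 4 ?N] XY \<open>\<not> ?N \<subseteq> Y\<close> by (simp add: intv_cc_def)
  then show thesis
    using below above outside inside by (rule that)
qed

lemma no_rainbow_B2_if_type1:
  assumes "type1 n c"
  shows "\<not> has_rainbow_B2 n c"
  using assms
proof (rule type1E)
  fix X Y
  assume colored_around_interval: "c {} \<noteq> c {1..n}"
    "\<And>Z. Z \<subseteq> Y \<Longrightarrow> \<not> X \<subseteq> Z \<Longrightarrow> c Z = c {}"
    "\<And>Z. X \<subseteq> Z \<Longrightarrow> Z \<subseteq> {1..n} \<Longrightarrow> \<not> Z \<subseteq> Y \<Longrightarrow> c Z = c {1..n}"
    "\<And>Z. Z \<subseteq> {1..n} \<Longrightarrow> \<not> X \<subseteq> Z \<Longrightarrow> \<not> Z \<subseteq> Y \<Longrightarrow> c Z \<in> {c {}, c {1..n}}"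
    "\<And>Z Z'. X \<subset> Z \<Longrightarrow> Z \<subset> Y \<Longrightarrow> X \<subset> Z' \<Longrightarrow> Z' \<subset> Y \<Longrightarrow> c Z = c Z'"
  show ?thesis
    unfolding has_rainbow_B2_def rainbow_B2_iff
  proof (intro notI, elim exE conjE)
    fix W1 W2 W3 W4
    assume W: "W4 \<subseteq> {1..n}" "W1 \<subset> W2" "W2 \<subset> W4" "W1 \<subset> W3" "W3 \<subset> W4" "\<not> W2 \<subseteq> W3" "\<not> W3 \<subseteq> W2"
      and colors: "distinct [c W1, c W2, c W3, c W4]"
    have "\<not> distinct [c W1, c W2, c W3, c W4]"
      using colored_around_interval W by (rule B2_not_rainbow_if_colored_around_interval)
    with colors show False
      by contradiction
  qed
qed

theorem lemma2p5:
  fixes k n :: nat and c :: "nat set \<Rightarrow> nat"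
  assumes "k \<ge> 5" and "n \<ge> 4"
    and "exact_coloring n k c"
    and "c {} \<noteq> c {1..n}"
  shows "\<not> has_rainbow_B2 n c \<longleftrightarrow> (k = 5 \<and> type1 n c)"
proof
  assume "\<not> has_rainbow_B2 n c"
  then have free: "rainbow_B2_free n c"
    using assms(4) by (rule rainbow_B2_free_if_not_has_rainbow_B2)
  have card_colors: "card (c ` Pow {1..n}) = k"
    using assms(3) unfolding exact_coloring_def Bn_def by simp
  with assms(1) obtain P Q R where chain: "rainbow_chain n c P Q R"
    using rainbow_B2_free.rainbow_chain_exists[OF free] by auto
  have "k \<le> 5"
    using rainbow_B2_free.card_colors_le_5[OF free chain] card_colors by simp
  with assms(1) type1_if_rainbow_chain[OF free chain] show "k = 5 \<and> type1 n c"
    by simp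
next
  assume "k = 5 \<and> type1 n c"
  then show "\<not> has_rainbow_B2 n c"
    using no_rainbow_B2_if_type1 by blast
qed

end
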